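(* Assume inhibitory coupling ($\varepsilon_{ij}\le0$ for all $i,j$ and $\varepsilon<0$). Let $\boldsymbol\delta\in\mathbb R^N$ with $\delta_i\ge0$ for all $i$, and suppose $\boldsymbol\delta$ is not a multiple of $(1,\dots,1)^{\mathsf T}$. Put - $\delta_M=\max_i\delta_i$; - $\delta_m=\max\{\delta_i:\delta_i<\delta_M\}$; - $\mathbb M=\{j:\delta_j=\delta_M\}$. Then for every ordering $\mathcal O$ and every $i$, $$(A(\mathcal O)\boldsymbol\delta)_i\le\delta_M-(\delta_M-\delta_m)\sum_{j\notin\mathbb M}A_{ij}(\mathcal O),$$ and $A(\mathcal O)\boldsymbol\delta$ has nonnegative components. In particular: - if there is no $i$ with $\mathrm{Pre}(i)\cup\{i\}\subseteq\mathbb M$, then $\max_i(A(\mathcal O)\boldsymbol\delta)_i<\delta_M$; - if such an $i$ exists, then $\max_i(A(\mathcal O)\boldsymbol\delta)_i=\delta_M$.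
   Context: Let $U$ be a twice continuously differentiable, strictly increasing function on an interval $I\subseteq\mathbb R$ containing $(-\infty,1]$. Assume $U'>0$ and $U''<0$ on $I$, $U(0)=0$ and $U(1)=1$. Fix $N\ge 2$ and a delay $\tau\in(0,1)$. For each $i$ fix a nonempty set $\mathrm{Pre}(i)\subseteq\{1,\dots,N\}\setminus\{i\}$ and put $k_i=|\mathrm{Pre}(i)|$. Fix real couplings $\varepsilon_{ij}$ with $\varepsilon_{ij}\neq0$ if and only if $j\in\mathrm{Pre}(i)$, normalized so that $\sum_j\varepsilon_{ij}=\varepsilon$ for every $i$. An ordering $\mathcal O$ is a choice, for each $i$, of an enumeration $j_1(i),\dots,j_{k_i}(i)$ of $\mathrm{Pre}(i)$. For $n\in\{0,\dots,k_i\}$ define $$p_{i,n}=\frac{U'\Big(U^{-1}\big(U(\tau)+\sum_{m=1}^{n}\varepsilon_{ij_m(i)}\big)\Big)}{U'\big(U^{-1}(U(\tau)+\varepsilon)\big)}.$$ The stability matrix $A(\mathcal O)$ has entries - $A_{ii}=p_{i,0}$; - $A_{ij}=p_{i,n}-p_{i,n-1}$ if $j=j_n(i)$; - $A_{ij}=0$ if $j\notin\mathrm{Pre}(i)\cup\{i\}$. *)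

theory Defs
  imports "HOL-Analysis.Analysis"
begin

text \<open>Indices are 1..N. Uinv is the inverse of U on the interval I (inv_into I U).
  ord i m is the m-th predecessor j_m(i) in the ordering, for m in 1..k_i.\<close>

definition pcoef :: "real set \<Rightarrow> (real \<Rightarrow> real) \<Rightarrow> (real \<Rightarrow> real) \<Rightarrow> real \<Rightarrow> real
    \<Rightarrow> (nat \<Rightarrow> nat \<Rightarrow> real) \<Rightarrow> (nat \<Rightarrow> nat \<Rightarrow> nat) \<Rightarrow> nat \<Rightarrow> nat \<Rightarrow> real" where
  "pcoef I U U' \<tau> eps \<epsilon> ord i n =
     U' (inv_into I U (U \<tau> + (\<Sum>m = 1..n. \<epsilon> i (ord i m))))
       / U' (inv_into I U (U \<tau> + eps))"

definition stabA :: "real set \<Rightarrow> (real \<Rightarrow> real) \<Rightarrow> (real \<Rightarrow> real) \<Rightarrow> real \<Rightarrow> real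
    \<Rightarrow> (nat \<Rightarrow> nat \<Rightarrow> real) \<Rightarrow> (nat \<Rightarrow> nat set) \<Rightarrow> (nat \<Rightarrow> nat \<Rightarrow> nat) \<Rightarrow> nat \<Rightarrow> nat \<Rightarrow> real" where
  "stabA I U U' \<tau> eps \<epsilon> Pre ord i j =
     (if j = i then pcoef I U U' \<tau> eps \<epsilon> ord i 0
      else if j \<in> Pre i then
        (let n = (THE n. n \<in> {1..card (Pre i)} \<and> ord i n = j) in
           pcoef I U U' \<tau> eps \<epsilon> ord i n - pcoef I U U' \<tau> eps \<epsilon> ord i (n - 1))
      else 0)"

end

theory Submission
  imports Defs
begin

text \<open>
  Under inhibitory coupling every row of the stability matrix is a
  probability vector whose support is exactly Pre(i) together with i.
  Writing p n = h(U tau + S n) / h(U tau + eps), where S n is the n-th partial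
  sum of the couplings along the ordering and h = U' o U^-1 is the marginal
  utility in value coordinates, concavity of U makes h strictly decreasing, the
  partial sums strictly decrease, hence p is positive and strictly increasing
  with p k = 1; the row entries are p 0 and the increments of p, so they are
  positive and telescope to 1.  The theorem is then a statement about weighted
  averages: averaging delta with such weights stays in [0, delta_M], loses at
  least (delta_M - delta_m) times the weight placed off the maximisers, and
  attains delta_M exactly when all weight sits on maximisers.
\<close>

section \<open>Strictly concave increasing utilities\<close>

locale concave_utility =
  fixes I :: "real set" and U U' U'' :: "real \<Rightarrow> real"
  assumes I_sup: "{..1} \<subseteq> I"
    and U_d1: "\<And>x. x \<in> I \<Longrightarrow> (U has_real_derivative U' x) (at x within I)"
    and U_d2: "\<And>x. x \<in> I \<Longrightarrow> (U' has_real_derivative U'' x) (at x within I)"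
    and U_mono: "strict_mono_on I U"
    and U'_pos: "\<And>x. x \<in> I \<Longrightarrow> U' x > 0"
    and U''_neg: "\<And>x. x \<in> I \<Longrightarrow> U'' x < 0"
    and U0: "U 0 = 0"
begin

definition marginal :: "real \<Rightarrow> real" where
  "marginal v = U' (inv_into I U v)"

text \<open>Below 1 the interval I is a neighbourhood, so the one-sided derivatives are genuine.\<close>
lemma has_derivative_at_below_1:
  assumes "x < 1"
  shows "(U has_real_derivative U' x) (at x)" and "(U' has_real_derivative U'' x) (at x)"
proof -
  have sub: "{..<(1::real)} \<subseteq> I" using I_sup by auto
  have xI: "x \<in> I" using I_sup assms by auto
  have at_eq: "at x within {..<1} = at x" using at_within_open[of x "{..<1}"] assms by simp
  show "(U has_real_derivative U' x) (at x)"
    using DERIV_subset[OF U_d1[OF xI] sub] at_eq by simp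
  show "(U' has_real_derivative U'' x) (at x)"
    using DERIV_subset[OF U_d2[OF xI] sub] at_eq by simp
qed

lemma U'_strict_antimono:
  assumes "x < y" "y < 1"
  shows "U' y < U' x"
proof -
  have "\<exists>d. DERIV U' z :> d \<and> d < 0" if "x \<le> z" "z \<le> y" for z
  proof -
    have "z < 1" "z \<in> I" using that assms I_sup by auto
    thus ?thesis using has_derivative_at_below_1(2) U''_neg by blast
  qed
  thus ?thesis using DERIV_neg_imp_decreasing[OF \<open>x < y\<close>] by blast
qed

text \<open>On the negative half-line U lies below its tangent at 0; this makes U unbounded below.\<close>
lemma U_below_tangent_at_0:
  assumes "x \<le> 0"
  shows "U x \<le> U' 0 * x"
proof (cases "x = 0")
  case True thus ?thesis using U0 by simp
next
  case False
  hence "x < 0" using assms by simp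
  obtain z where z: "x < z" "z < 0" "U 0 - U x = (0 - x) * U' z"
    using MVT2[OF \<open>x < 0\<close>, of U U'] has_derivative_at_below_1(1) by force
  have "U' 0 < U' z" using U'_strict_antimono[OF z(2)] by simp
  hence "x * (U' z - U' 0) \<le> 0" using \<open>x < 0\<close> by (simp add: mult_nonpos_nonneg)
  thus ?thesis using z(3) U0 by (simp add: algebra_simps)
qed

text \<open>Every value up to U b (with 0 \<le> b < 1) is attained in I at a point at most b,
  by the intermediate value theorem; hence U^-1 is well behaved there.\<close>
lemma inv_into_below:
  assumes b: "0 \<le> b" "b < 1" and v: "v \<le> U b"
  shows "inv_into I U v \<in> I" "inv_into I U v \<le> b" "U (inv_into I U v) = v"
proof -
  have U'0: "U' 0 > 0" using U'_pos I_sup by (simp add: subset_eq)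
  define a where "a = min 0 (v / U' 0)"
  have a0: "a \<le> 0" unfolding a_def by simp
  have Ua: "U a \<le> v"
  proof (cases "v / U' 0 \<le> 0")
    case True
    thus ?thesis using U_below_tangent_at_0[OF a0] U'0 by (simp add: a_def)
  next
    case False
    hence "a = 0" "v \<ge> 0" using U'0 by (auto simp: a_def divide_simps split: if_splits)
    thus ?thesis using U0 by simp
  qed
  have "continuous_on {a..b} U"
  proof (intro continuous_at_imp_continuous_on ballI)
    fix x assume "x \<in> {a..b}"
    hence "x < 1" using b by auto
    thus "isCont U x" using DERIV_isCont[OF has_derivative_at_below_1(1)] by blast
  qed
  then obtain x where x: "a \<le> x" "x \<le> b" "U x = v"
    using IVT'[of U a v b, OF Ua v] a0 b by auto
  have xI: "x \<in> I" using x b I_sup by auto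
  have "inv_into I U v = x"
    using inv_into_f_eq[OF strict_mono_on_imp_inj_on[OF U_mono] xI x(3)] .
  thus "inv_into I U v \<in> I" "inv_into I U v \<le> b" "U (inv_into I U v) = v"
    using x xI by simp_all
qed

lemma marginal_pos:
  assumes "0 \<le> b" "b < 1" "v \<le> U b"
  shows "marginal v > 0"
  using U'_pos inv_into_below(1)[OF assms] by (simp add: marginal_def)

lemma marginal_strict_antimono:
  assumes b: "0 \<le> b" "b < 1" and v: "v1 < v2" "v2 \<le> U b"
  shows "marginal v2 < marginal v1"
proof -
  let ?x1 = "inv_into I U v1" and ?x2 = "inv_into I U v2"
  note i1 = inv_into_below[OF b, of v1] and i2 = inv_into_below[OF b, of v2]
  have "?x1 < ?x2"
  proof (rule ccontr)
    assume "\<not> ?x1 < ?x2"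
    hence "?x2 < ?x1 \<or> ?x2 = ?x1" by auto
    thus False using strict_mono_onD[OF U_mono, of ?x2 ?x1] i1 i2 v by auto
  qed
  thus ?thesis using U'_strict_antimono i2 v b by (simp add: marginal_def)
qed

lemma pcoef_eq_marginal:
  "pcoef I U U' \<tau> eps \<epsilon> ord i n =
     marginal (U \<tau> + (\<Sum>m = 1..n. \<epsilon> i (ord i m))) / marginal (U \<tau> + eps)"
  by (simp add: pcoef_def marginal_def)

lemma pcoef_strict_mono:
  assumes tau: "0 \<le> \<tau>" "\<tau> < 1"
    and neg: "\<forall>m\<in>{1..k}. \<epsilon> i (ord i m) < 0"
    and total: "(\<Sum>m = 1..k. \<epsilon> i (ord i m)) = eps"
  defines "p \<equiv> pcoef I U U' \<tau> eps \<epsilon> ord i"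
  shows "p 0 > 0" and "p k = 1" and "\<And>m. m \<in> {1..k} \<Longrightarrow> p (m - 1) < p m"
proof -
  define S where "S n = (\<Sum>m = 1..n. \<epsilon> i (ord i m))" for n
  have S_nonpos: "S n \<le> 0" if "n \<le> k" for n
    unfolding S_def using neg that by (intro sum_nonpos) (simp add: less_imp_le)
  have p_eq: "p n = marginal (U \<tau> + S n) / marginal (U \<tau> + eps)" for n
    by (simp add: p_def S_def pcoef_eq_marginal)
  have den: "marginal (U \<tau> + eps) > 0"
    using marginal_pos[OF tau] S_nonpos[of k] total by (simp add: S_def)
  show "p 0 > 0" using marginal_pos[OF tau, of "U \<tau>"] den by (simp add: p_eq S_def)
  show "p k = 1" using den total by (simp add: p_eq S_def)
  fix m assume m: "m \<in> {1..k}"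
  have "S m = S (m - 1) + \<epsilon> i (ord i m)"
    using m by (cases m) (auto simp: S_def)
  hence "S m < S (m - 1)" using neg m by simp
  moreover have "S (m - 1) \<le> 0" using m by (intro S_nonpos) auto
  ultimately have "marginal (U \<tau> + S (m - 1)) < marginal (U \<tau> + S m)"
    by (intro marginal_strict_antimono[OF tau]) auto
  thus "p (m - 1) < p m" using den by (simp add: p_eq divide_strict_right_mono)
qed

end

section \<open>Rows of the stability matrix\<close>

lemma stabA_entries:
  fixes I U U' \<tau> eps \<epsilon> Pre ord
  assumes bij: "bij_betw (ord i) {1..card (Pre i)} (Pre i)" and irr: "i \<notin> Pre i"
  defines "p \<equiv> pcoef I U U' \<tau> eps \<epsilon> ord i" and "A \<equiv> stabA I U U' \<tau> eps \<epsilon> Pre ord"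
  shows "A i i = p 0"
    and "\<And>m. m \<in> {1..card (Pre i)} \<Longrightarrow> A i (ord i m) = p m - p (m - 1)"
    and "\<And>j. j \<notin> insert i (Pre i) \<Longrightarrow> A i j = 0"
proof -
  show "A i i = p 0" by (simp add: A_def p_def stabA_def)
  show "A i j = 0" if "j \<notin> insert i (Pre i)" for j
    using that by (simp add: A_def stabA_def)
  fix m assume m: "m \<in> {1..card (Pre i)}"
  have inj: "inj_on (ord i) {1..card (Pre i)}" using bij bij_betw_imp_inj_on by blast
  have ordP: "ord i m \<in> Pre i" using bij m bij_betwE by blast
  have "(THE n. n \<in> {1..card (Pre i)} \<and> ord i n = ord i m) = m"
    using m inj by (intro the_equality) (auto dest: inj_onD)
  thus "A i (ord i m) = p m - p (m - 1)"
    using ordP irr by (auto simp: A_def p_def stabA_def Let_def)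
qed

lemma telescope_from_1:
  fixes f :: "nat \<Rightarrow> real"
  shows "(\<Sum>m = 1..n. f m - f (m - 1)) = f n - f 0"
  by (induction n) (auto simp: sum.atLeast1_atMost_eq)

lemma stabA_row_stochastic:
  fixes I U U' \<tau> eps \<epsilon> Pre ord
  assumes bij: "bij_betw (ord i) {1..card (Pre i)} (Pre i)" and irr: "i \<notin> Pre i"
    and fin: "finite J" and sub: "insert i (Pre i) \<subseteq> J"
  defines "p \<equiv> pcoef I U U' \<tau> eps \<epsilon> ord i" and "A \<equiv> stabA I U U' \<tau> eps \<epsilon> Pre ord"
  assumes p0: "p 0 > 0" and pk: "p (card (Pre i)) = 1"
    and p_inc: "\<And>m. m \<in> {1..card (Pre i)} \<Longrightarrow> p (m - 1) < p m"
  shows "\<And>j. j \<in> insert i (Pre i) \<Longrightarrow> A i j > 0"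
    and "\<And>j. j \<notin> insert i (Pre i) \<Longrightarrow> A i j = 0"
    and "(\<Sum>j\<in>J. A i j) = 1"
proof -
  let ?k = "card (Pre i)"
  note entries = stabA_entries[where I=I and U=U and U'=U' and \<tau>=\<tau> and eps=eps and \<epsilon>=\<epsilon>
      and Pre=Pre and ord=ord and i=i, OF bij irr, folded p_def A_def]
  show zero: "A i j = 0" if "j \<notin> insert i (Pre i)" for j using entries(3) that .
  show "A i j > 0" if j: "j \<in> insert i (Pre i)" for j
  proof (cases "j = i")
    case True thus ?thesis using entries(1) p0 by simp
  next
    case False
    then obtain m where "m \<in> {1..?k}" "j = ord i m"
      using j bij_betw_imp_surj_on[OF bij] by blast
    thus ?thesis using entries(2) p_inc by simp
  qed
  have "(\<Sum>j\<in>J. A i j) = (\<Sum>j\<in>insert i (Pre i). A i j)"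
    using fin sub zero by (intro sum.mono_neutral_right) auto
  also have "\<dots> = A i i + (\<Sum>m\<in>{1..?k}. A i (ord i m))"
    using finite_subset[OF sub fin] irr sum.reindex_bij_betw[OF bij, of "A i"] by simp
  also have "\<dots> = p 0 + (\<Sum>m = 1..?k. p m - p (m - 1))" using entries(1,2) by simp
  also have "\<dots> = 1" using pk telescope_from_1[of p ?k] by simp
  finally show "(\<Sum>j\<in>J. A i j) = 1" .
qed

lemma (in concave_utility) inhibitory_row_stochastic:
  assumes tau: "0 \<le> \<tau>" "\<tau> < 1" and fin: "finite J" and i: "i \<in> J"
    and Pre_sub: "Pre i \<subseteq> J - {i}"
    and supp: "\<And>j. j \<in> J \<Longrightarrow> \<epsilon> i j \<noteq> 0 \<longleftrightarrow> j \<in> Pre i"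
    and inhib: "\<And>j. j \<in> J \<Longrightarrow> \<epsilon> i j \<le> 0" and total: "(\<Sum>j\<in>J. \<epsilon> i j) = eps"
    and bij: "bij_betw (ord i) {1..card (Pre i)} (Pre i)"
  defines "A \<equiv> stabA I U U' \<tau> eps \<epsilon> Pre ord"
  shows "\<And>j. j \<in> insert i (Pre i) \<Longrightarrow> A i j > 0"
    and "\<And>j. j \<notin> insert i (Pre i) \<Longrightarrow> A i j = 0"
    and "(\<Sum>j\<in>J. A i j) = 1"
proof -
  let ?k = "card (Pre i)"
  have ordP: "ord i m \<in> Pre i" if "m \<in> {1..?k}" for m using bij that bij_betwE by blast
  have neg: "\<forall>m\<in>{1..?k}. \<epsilon> i (ord i m) < 0"
  proof
    fix m assume "m \<in> {1..?k}"
    hence "ord i m \<in> Pre i" "ord i m \<in> J" using ordP Pre_sub by auto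
    thus "\<epsilon> i (ord i m) < 0" using supp inhib by force
  qed
  have "(\<Sum>m = 1..?k. \<epsilon> i (ord i m)) = (\<Sum>j\<in>Pre i. \<epsilon> i j)"
    using sum.reindex_bij_betw[OF bij, of "\<epsilon> i"] by simp
  also have "\<dots> = eps"
    using Pre_sub supp fin total by (subst sum.mono_neutral_left[of J "Pre i"]) auto
  finally have sum_eps: "(\<Sum>m = 1..?k. \<epsilon> i (ord i m)) = eps" .
  note p = pcoef_strict_mono[where \<epsilon>=\<epsilon> and ord=ord and i=i and k="card (Pre i)", OF tau neg sum_eps]
  have irr: "i \<notin> Pre i" and sub: "insert i (Pre i) \<subseteq> J" using Pre_sub i by auto
  show "\<And>j. j \<in> insert i (Pre i) \<Longrightarrow> A i j > 0"
    and "\<And>j. j \<notin> insert i (Pre i) \<Longrightarrow> A i j = 0"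
    and "(\<Sum>j\<in>J. A i j) = 1"
    using stabA_row_stochastic[where I=I and U=U and U'=U' and \<tau>=\<tau> and eps=eps and \<epsilon>=\<epsilon>
        and Pre=Pre and ord=ord and i=i, OF bij irr fin sub p]
    unfolding A_def by blast+
qed

section \<open>Weighted averages\<close>

lemma second_largest_value:
  fixes \<delta> :: "'a \<Rightarrow> real"
  assumes fin: "finite J" and nonconst: "\<exists>j\<in>J. \<delta> j \<noteq> \<delta>M"
    and \<delta>M_def: "\<delta>M = Max (\<delta> ` J)" and \<delta>m_def: "\<delta>m = Max {\<delta> j | j. j \<in> J \<and> \<delta> j < \<delta>M}"
  shows "\<And>j. j \<in> J \<Longrightarrow> \<delta> j \<le> \<delta>M"
    and "\<And>j. j \<in> J \<Longrightarrow> \<delta> j < \<delta>M \<Longrightarrow> \<delta> j \<le> \<delta>m"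
    and "\<delta>m < \<delta>M"
proof -
  let ?L = "{\<delta> j | j. j \<in> J \<and> \<delta> j < \<delta>M}"
  show le_max: "\<delta> j \<le> \<delta>M" if "j \<in> J" for j using fin that by (simp add: \<delta>M_def)
  have L_fin: "finite ?L" using fin by (auto intro: finite_subset[of _ "\<delta> ` J"])
  have "?L \<noteq> {}" using nonconst le_max unfolding \<delta>M_def by force
  thus "\<delta>m < \<delta>M" using Max_in[OF L_fin] by (auto simp: \<delta>m_def)
  show "\<delta> j \<le> \<delta>m" if "j \<in> J" "\<delta> j < \<delta>M" for j
    unfolding \<delta>m_def using L_fin that by (intro Max_ge) auto
qed

lemma weighted_average_bound:
  fixes a \<delta> :: "'a \<Rightarrow> real"
  assumes fin: "finite J" and a_nn: "\<And>j. j \<in> J \<Longrightarrow> a j \<ge> 0" and a_sum: "(\<Sum>j\<in>J. a j) = 1"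
    and le_M: "\<And>j. j \<in> J \<Longrightarrow> \<delta> j \<le> \<delta>M"
    and le_m: "\<And>j. j \<in> J \<Longrightarrow> \<delta> j < \<delta>M \<Longrightarrow> \<delta> j \<le> \<delta>m"
  defines "M \<equiv> {j \<in> J. \<delta> j = \<delta>M}"
  shows "(\<Sum>j\<in>J. a j * \<delta> j) \<le> \<delta>M - (\<delta>M - \<delta>m) * (\<Sum>j\<in>J - M. a j)"
proof -
  let ?R = "\<Sum>j\<in>J - M. a j"
  have M_sub: "M \<subseteq> J" by (auto simp: M_def)
  have weight_M: "(\<Sum>j\<in>M. a j) = 1 - ?R"
    using sum.subset_diff[OF M_sub fin, of a] a_sum by simp
  have "(\<Sum>j\<in>J. a j * \<delta> j) = (\<Sum>j\<in>J - M. a j * \<delta> j) + (\<Sum>j\<in>M. a j * \<delta> j)"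
    using sum.subset_diff[OF M_sub fin] by simp
  also have "(\<Sum>j\<in>M. a j * \<delta> j) = (\<Sum>j\<in>M. a j) * \<delta>M"
    by (simp add: M_def sum_distrib_right)
  also have "\<dots> = \<delta>M - \<delta>M * ?R" by (simp add: weight_M algebra_simps)
  also have "(\<Sum>j\<in>J - M. a j * \<delta> j) \<le> (\<Sum>j\<in>J - M. a j * \<delta>m)"
  proof (rule sum_mono)
    fix j assume j: "j \<in> J - M"
    hence "\<delta> j \<le> \<delta>m" using le_M le_m by (force simp: M_def)
    thus "a j * \<delta> j \<le> a j * \<delta>m" using a_nn j by (simp add: mult_left_mono)
  qed
  also have "(\<Sum>j\<in>J - M. a j * \<delta>m) = ?R * \<delta>m" by (simp add: sum_distrib_right)
  finally show ?thesis by (simp add: algebra_simps)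
qed

lemma weighted_average_strict:
  fixes a \<delta> :: "'a \<Rightarrow> real"
  assumes fin: "finite J" and a_nn: "\<And>j. j \<in> J \<Longrightarrow> a j \<ge> 0" and a_sum: "(\<Sum>j\<in>J. a j) = 1"
    and le_M: "\<And>j. j \<in> J \<Longrightarrow> \<delta> j \<le> \<delta>M"
    and le_m: "\<And>j. j \<in> J \<Longrightarrow> \<delta> j < \<delta>M \<Longrightarrow> \<delta> j \<le> \<delta>m" and gap: "\<delta>m < \<delta>M"
    and off: "j0 \<in> J" "\<delta> j0 \<noteq> \<delta>M" "a j0 > 0"
  shows "(\<Sum>j\<in>J. a j * \<delta> j) < \<delta>M"
proof -
  let ?M = "{j \<in> J. \<delta> j = \<delta>M}"
  have "0 < a j0" by (fact off(3))
  also have "a j0 \<le> (\<Sum>j\<in>J - ?M. a j)"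
    using fin a_nn off by (intro member_le_sum) auto
  finally have "0 < (\<delta>M - \<delta>m) * (\<Sum>j\<in>J - ?M. a j)" using gap by simp
  thus ?thesis using weighted_average_bound[where \<delta>=\<delta> and \<delta>M=\<delta>M and \<delta>m=\<delta>m,
      OF fin a_nn a_sum le_M le_m] by linarith
qed

lemma weighted_average_on_max:
  fixes a \<delta> :: "'a \<Rightarrow> real"
  assumes a_sum: "(\<Sum>j\<in>J. a j) = 1" and on_max: "\<And>j. j \<in> J \<Longrightarrow> a j \<noteq> 0 \<Longrightarrow> \<delta> j = \<delta>M"
  shows "(\<Sum>j\<in>J. a j * \<delta> j) = \<delta>M"
proof -
  have "(\<Sum>j\<in>J. a j * \<delta> j) = (\<Sum>j\<in>J. a j * \<delta>M)"
    using on_max by (intro sum.cong) auto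
  thus ?thesis using a_sum by (simp add: sum_distrib_right[symmetric])
qed

theorem mainTheorem6:
  fixes U U' U'' :: "real \<Rightarrow> real" and I :: "real set"
    and N :: nat and \<tau> eps :: real
    and Pre :: "nat \<Rightarrow> nat set" and \<epsilon> :: "nat \<Rightarrow> nat \<Rightarrow> real"
    and ord :: "nat \<Rightarrow> nat \<Rightarrow> nat" and \<delta> :: "nat \<Rightarrow> real"
  assumes I_int: "is_interval I" and I_sup: "{..1} \<subseteq> I"
    and U_d1: "\<And>x. x \<in> I \<Longrightarrow> (U has_real_derivative U' x) (at x within I)"
    and U_d2: "\<And>x. x \<in> I \<Longrightarrow> (U' has_real_derivative U'' x) (at x within I)"
    and U''_cont: "continuous_on I U''"
    and U_mono: "strict_mono_on I U"
    and U'_pos: "\<And>x. x \<in> I \<Longrightarrow> U' x > 0"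
    and U''_neg: "\<And>x. x \<in> I \<Longrightarrow> U'' x < 0"
    and U0: "U 0 = 0" and U1: "U 1 = 1"
    and N2: "N \<ge> 2" and tau: "0 < \<tau>" "\<tau> < 1"
    and Pre_sub: "\<And>i. i \<in> {1..N} \<Longrightarrow> Pre i \<subseteq> {1..N} - {i}"
    and Pre_ne: "\<And>i. i \<in> {1..N} \<Longrightarrow> Pre i \<noteq> {}"
    and eps_supp: "\<And>i j. i \<in> {1..N} \<Longrightarrow> j \<in> {1..N} \<Longrightarrow> (\<epsilon> i j \<noteq> 0 \<longleftrightarrow> j \<in> Pre i)"
    and eps_sum: "\<And>i. i \<in> {1..N} \<Longrightarrow> (\<Sum>j\<in>{1..N}. \<epsilon> i j) = eps"
    and inhib: "\<And>i j. i \<in> {1..N} \<Longrightarrow> j \<in> {1..N} \<Longrightarrow> \<epsilon> i j \<le> 0" and eps_neg: "eps < 0"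
    and ordering: "\<And>i. i \<in> {1..N} \<Longrightarrow> bij_betw (ord i) {1..card (Pre i)} (Pre i)"
    and delta_nn: "\<And>i. i \<in> {1..N} \<Longrightarrow> \<delta> i \<ge> 0"
    and delta_nc: "\<not> (\<exists>c. \<forall>i\<in>{1..N}. \<delta> i = c)"
  shows "let A = stabA I U U' \<tau> eps \<epsilon> Pre ord;
             A\<delta> = (\<lambda>i. \<Sum>j\<in>{1..N}. A i j * \<delta> j);
             \<delta>M = Max (\<delta> ` {1..N});
             \<delta>m = Max {\<delta> i | i. i \<in> {1..N} \<and> \<delta> i < \<delta>M};
             MM = {j \<in> {1..N}. \<delta> j = \<delta>M}
         in (\<forall>i\<in>{1..N}. A\<delta> i \<le> \<delta>M - (\<delta>M - \<delta>m) * (\<Sum>j\<in>{1..N} - MM. A i j))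
          \<and> (\<forall>i\<in>{1..N}. A\<delta> i \<ge> 0)
          \<and> ((\<nexists>i. i \<in> {1..N} \<and> Pre i \<union> {i} \<subseteq> MM) \<longrightarrow> Max (A\<delta> ` {1..N}) < \<delta>M)
          \<and> ((\<exists>i. i \<in> {1..N} \<and> Pre i \<union> {i} \<subseteq> MM) \<longrightarrow> Max (A\<delta> ` {1..N}) = \<delta>M)"
proof -
  interpret concave_utility I U U' U''
    using I_sup U_d1 U_d2 U_mono U'_pos U''_neg U0 by unfold_locales
  define A where "A = stabA I U U' \<tau> eps \<epsilon> Pre ord"
  define A\<delta> where "A\<delta> = (\<lambda>i. \<Sum>j\<in>{1..N}. A i j * \<delta> j)"
  define \<delta>M where "\<delta>M = Max (\<delta> ` {1..N})"
  define \<delta>m where "\<delta>m = Max {\<delta> i | i. i \<in> {1..N} \<and> \<delta> i < \<delta>M}"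
  define MM where "MM = {j \<in> {1..N}. \<delta> j = \<delta>M}"
  have N_ne: "{1..N} \<noteq> {}" using N2 by simp
  have row: "\<And>j. j \<in> insert i (Pre i) \<Longrightarrow> A i j > 0"
    "\<And>j. j \<notin> insert i (Pre i) \<Longrightarrow> A i j = 0" "(\<Sum>j\<in>{1..N}. A i j) = 1"
    if i: "i \<in> {1..N}" for i
    using inhibitory_row_stochastic[where J="{1..N}" and i=i and Pre=Pre and \<epsilon>=\<epsilon>
        and ord=ord and eps=eps and \<tau>=\<tau>, OF less_imp_le[OF tau(1)] tau(2)
        finite_atLeastAtMost i Pre_sub[OF i] eps_supp[OF i] inhib[OF i] eps_sum[OF i] ordering[OF i]]
    unfolding A_def by blast+
  have A_nn: "A i j \<ge> 0" if "i \<in> {1..N}" for i j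
    using row(1,2)[OF that, of j] by (cases "j \<in> insert i (Pre i)") auto
  have nonconst: "\<exists>j\<in>{1..N}. \<delta> j \<noteq> \<delta>M" using delta_nc by blast
  note \<delta>_bounds = second_largest_value[OF finite_atLeastAtMost nonconst \<delta>M_def \<delta>m_def]
  have average: "A\<delta> i \<le> \<delta>M - (\<delta>M - \<delta>m) * (\<Sum>j\<in>{1..N} - MM. A i j)" if i: "i \<in> {1..N}" for i
    unfolding A\<delta>_def MM_def
    using weighted_average_bound[where a="A i" and \<delta>=\<delta>, OF finite_atLeastAtMost A_nn[OF i]
        row(3)[OF i] \<delta>_bounds(1,2)] .
  have below_M: "A\<delta> i \<le> \<delta>M" if "i \<in> {1..N}" for i
  proof -
    have "0 \<le> (\<delta>M - \<delta>m) * (\<Sum>j\<in>{1..N} - MM. A i j)"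
      using \<delta>_bounds(3) A_nn[OF that] by (simp add: sum_nonneg)
    thus ?thesis using average[OF that] by linarith
  qed
  have nonneg: "A\<delta> i \<ge> 0" if "i \<in> {1..N}" for i
    unfolding A\<delta>_def using A_nn[OF that] delta_nn by (intro sum_nonneg) simp
  have strict: "Max (A\<delta> ` {1..N}) < \<delta>M" if none: "\<nexists>i. i \<in> {1..N} \<and> Pre i \<union> {i} \<subseteq> MM"
  proof -
    have "A\<delta> i < \<delta>M" if i: "i \<in> {1..N}" for i
    proof -
      obtain j where j: "j \<in> insert i (Pre i)" "j \<notin> MM" using none i by blast
      hence "j \<in> {1..N}" using Pre_sub[OF i] i by blast
      thus ?thesis
        using weighted_average_strict[where a="A i" and \<delta>=\<delta>, OF finite_atLeastAtMost A_nn[OF i]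
            row(3)[OF i] \<delta>_bounds, of j] row(1)[OF i j(1)] j(2)
        unfolding A\<delta>_def MM_def by blast
    qed
    thus ?thesis using N_ne by (simp add: Max_less_iff)
  qed
  have attained: "Max (A\<delta> ` {1..N}) = \<delta>M" if some: "\<exists>i. i \<in> {1..N} \<and> Pre i \<union> {i} \<subseteq> MM"
  proof -
    obtain i where i: "i \<in> {1..N}" "Pre i \<union> {i} \<subseteq> MM" using some by blast
    have on_max: "\<delta> j = \<delta>M" if "j \<in> {1..N}" "A i j \<noteq> 0" for j
      using row(2)[OF i(1), of j] that i(2) by (auto simp: MM_def)
    have "A\<delta> i = \<delta>M"
      unfolding A\<delta>_def by (rule weighted_average_on_max[OF row(3)[OF i(1)] on_max])
    thus ?thesis using i(1) below_M by (intro Max_eqI) auto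
  qed
  have "(\<forall>i\<in>{1..N}. A\<delta> i \<le> \<delta>M - (\<delta>M - \<delta>m) * (\<Sum>j\<in>{1..N} - MM. A i j))
      \<and> (\<forall>i\<in>{1..N}. A\<delta> i \<ge> 0)
      \<and> ((\<nexists>i. i \<in> {1..N} \<and> Pre i \<union> {i} \<subseteq> MM) \<longrightarrow> Max (A\<delta> ` {1..N}) < \<delta>M)
      \<and> ((\<exists>i. i \<in> {1..N} \<and> Pre i \<union> {i} \<subseteq> MM) \<longrightarrow> Max (A\<delta> ` {1..N}) = \<delta>M)"
    using average nonneg strict attained by blast
  thus ?thesis unfolding Let_def A\<delta>_def A_def \<delta>m_def MM_def \<delta>M_def .
qed

end
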